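(* Let $x>3$ be an integer and let $\varepsilon:=s^-(3)$. Then $$\varepsilon+\log(2)\Big(\frac13+\frac14+\cdots+\frac1{x-1}\Big)\;\le\;s^-(x)\;\le\;\log(x-1).$$
   Context: A square is a nonempty word of the form $uu$; a word is square-free if no contiguous subword of it is a square. $\omega_n^-(x)$ is the number of square-free words of length $n$ over an $x$-letter alphabet and $s^-(x)=\lim_{n\to\infty}\frac1n\log\omega_n^-(x)$ (this limit exists). *)

theory Defs
  imports Complex_Main
begin

definition square_free :: "'a list \<Rightarrow> bool" where
  "square_free w \<longleftrightarrow> \<not> (\<exists>p u s. u \<noteq> [] \<and> w = p @ u @ u @ s)"

definition omega_sf :: "nat \<Rightarrow> nat \<Rightarrow> nat" where
  "omega_sf n x = card {w :: nat list. length w = n \<and> set w \<subseteq> {0..<x} \<and> square_free w}"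

definition s_sf :: "nat \<Rightarrow> real" where
  "s_sf x = lim (\<lambda>n. ln (real (omega_sf n x)) / real n)"

end

theory Submission
  imports Defs
begin

text \<open>The counts \<open>omega_sf n k\<close> are submultiplicative in \<open>n\<close> and positive for \<open>k \<ge> 3\<close> (the first
  differences of the overlap-free Thue--Morse sequence form a square-free ternary word of every
  length), so \<open>s_sf k\<close> is a limit by Fekete's lemma.
  Upper bound: a square-free word never repeats its last letter, so
  \<open>omega_sf n x \<le> x (x - 1)^(n - 1)\<close>.
  Lower bound: in a square-free word of length \<open>n\<close> over \<open>k\<close> letters some letter \<open>a\<close> occurs at
  least \<open>n / k\<close> times; renaming any subset of these occurrences to a new letter keeps the word
  square-free (renaming back is a letter-to-letter morphism), and different choices give
  different words. Summing over \<open>a\<close> gives \<open>2^(n/k) omega_sf n k \<le> k omega_sf n (k + 1)\<close>, hence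
  \<open>s_sf (k + 1) \<ge> s_sf k + ln 2 / k\<close>, which telescopes.\<close>

section \<open>Fekete's lemma\<close>

lemma subadditive_le_mult_add:
  fixes a :: "nat \<Rightarrow> real"
  assumes sub: "\<And>m n. a (m + n) \<le> a m + a n"
  shows "a (q * m + r) \<le> real q * a m + a r"
proof (induction q)
  case (Suc q)
  have "a (Suc q * m + r) = a (m + (q * m + r))" by (simp add: add.assoc)
  also have "\<dots> \<le> a m + a (q * m + r)" by (rule sub)
  finally show ?case using Suc by (simp add: algebra_simps)
qed simp

lemma subadditive_quotient_le:
  fixes a :: "nat \<Rightarrow> real"
  assumes nonneg: "\<And>n. a n \<ge> 0" and sub: "\<And>m n. a (m + n) \<le> a m + a n"
    and "m \<ge> 1" "n \<ge> 1"
  shows "a n / n \<le> a m / m + (\<Sum>r<m. a r) / n"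
proof -
  define q r where "q = n div m" and "r = n mod m"
  have "n = q * m + r" by (simp add: q_def r_def)
  then have "a n \<le> real q * a m + a r" using subadditive_le_mult_add[of a, OF sub] by simp
  moreover have "a r \<le> (\<Sum>r<m. a r)"
    by (rule member_le_sum) (use \<open>m \<ge> 1\<close> nonneg in \<open>auto simp: r_def\<close>)
  moreover have "real q * a m \<le> a m * (n / m)"
  proof -
    have "q * m \<le> n" unfolding q_def by (rule div_times_less_eq_dividend)
    then have "real m * (real q * a m) \<le> real n * a m"
      by (metis mult.assoc mult.commute mult_right_mono nonneg of_nat_le_iff of_nat_mult)
    then show ?thesis using \<open>m \<ge> 1\<close> by (simp add: field_simps)
  qed
  ultimately have "a n \<le> a m * (n / m) + (\<Sum>r<m. a r)" by linarith
  then show ?thesis using \<open>n \<ge> 1\<close> by (simp add: field_simps)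
qed

lemma fekete:
  fixes a :: "nat \<Rightarrow> real"
  assumes nonneg: "\<And>n. a n \<ge> 0" and sub: "\<And>m n. a (m + n) \<le> a m + a n"
  shows "(\<lambda>n. a n / n) \<longlonglongrightarrow> (INF n\<in>{1..}. a n / n)"
proof -
  have bdd: "bdd_below ((\<lambda>n. a n / n) ` {1..})"
    using nonneg by (intro bdd_belowI2[of _ 0]) simp
  show ?thesis
  proof (rule order_tendstoI)
    fix y assume "y < (INF n\<in>{1..}. a n / n)"
    then have "y < a n / n" if "n \<ge> 1" for n
      using cINF_lower[OF bdd, of n] that by simp
    then show "\<forall>\<^sub>F n in sequentially. y < a n / n"
      by (auto intro: eventually_mono[OF eventually_ge_at_top[of 1]])
  next
    fix y assume "(INF n\<in>{1..}. a n / n) < y"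
    then obtain m where "m \<ge> 1" and m: "a m / m < y"
      using cINF_less_iff[OF _ bdd] by auto
    have "(\<lambda>n. a m / m + (\<Sum>r<m. a r) / n) \<longlonglongrightarrow> a m / m + 0"
      by (intro tendsto_intros)
    then have "\<forall>\<^sub>F n in sequentially. a m / m + (\<Sum>r<m. a r) / n < y"
      using m by (simp add: order_tendstoD)
    then show "\<forall>\<^sub>F n in sequentially. a n / n < y"
      using eventually_ge_at_top[of 1]
      by eventually_elim
        (rule le_less_trans[OF subadditive_quotient_le[of a, OF nonneg sub \<open>m \<ge> 1\<close>]]; assumption)
  qed
qed

lemma square_free_appendD: "square_free (u @ v) \<Longrightarrow> square_free u \<and> square_free v"
  unfolding square_free_def by (metis append.assoc)

lemma square_free_mapD: "square_free (map f v) \<Longrightarrow> square_free v"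
  unfolding square_free_def by (metis Nil_is_map_conv map_append)

definition sf_words :: "nat \<Rightarrow> nat \<Rightarrow> nat list set" where
  "sf_words n k = {w. length w = n \<and> set w \<subseteq> {0..<k} \<and> square_free w}"

lemma omega_sf_eq_card: "omega_sf n k = card (sf_words n k)"
  unfolding omega_sf_def sf_words_def ..

lemma finite_sf_words: "finite (sf_words n k)"
proof (rule finite_subset)
  show "sf_words n k \<subseteq> {w. set w \<subseteq> {0..<k} \<and> length w = n}"
    unfolding sf_words_def by auto
qed (rule finite_lists_length_eq, simp)

lemma omega_sf_mono: "k \<le> k' \<Longrightarrow> omega_sf n k \<le> omega_sf n k'"
  unfolding omega_sf_eq_card by (intro card_mono finite_sf_words) (auto simp: sf_words_def)

lemma omega_sf_add_le: "omega_sf (m + n) k \<le> omega_sf m k * omega_sf n k"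
proof -
  have "sf_words (m + n) k \<subseteq> (\<lambda>(u, v). u @ v) ` (sf_words m k \<times> sf_words n k)"
  proof
    fix w assume w: "w \<in> sf_words (m + n) k"
    then have "square_free (take m w) \<and> square_free (drop m w)"
      using square_free_appendD[of "take m w" "drop m w"] by (simp add: sf_words_def)
    with w have "(take m w, drop m w) \<in> sf_words m k \<times> sf_words n k"
      by (auto simp: sf_words_def dest: in_set_takeD in_set_dropD)
    then show "w \<in> (\<lambda>(u, v). u @ v) ` (sf_words m k \<times> sf_words n k)"
      by (intro image_eqI[of _ _ "(take m w, drop m w)"]) auto
  qed
  then have "card (sf_words (m + n) k) \<le> card (sf_words m k \<times> sf_words n k)"
    by (meson card_image_le card_mono finite_SigmaI finite_imageI finite_sf_words le_trans)
  then show ?thesis by (simp add: omega_sf_eq_card card_cartesian_product)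
qed

section \<open>Square-free ternary words from the Thue--Morse sequence\<close>

fun thue_morse :: "nat \<Rightarrow> bool" where
  "thue_morse n = (if n = 0 then False else thue_morse (n div 2) \<noteq> odd n)"

declare thue_morse.simps [simp del]

lemma thue_morse_double [simp]: "thue_morse (2 * m) = thue_morse m"
  by (cases "m = 0") (simp_all add: thue_morse.simps[of 0] thue_morse.simps[of "2 * m"])

lemma thue_morse_Suc_double [simp]: "thue_morse (Suc (2 * m)) = (\<not> thue_morse m)"
  by (simp add: thue_morse.simps[of "Suc (2 * m)"])

lemma thue_morse_not_three_equal:
  "\<not> (thue_morse j = thue_morse (j + 1) \<and> thue_morse (j + 1) = thue_morse (j + 2))"
proof (cases "even j")
  case True
  then obtain m where "j = 2 * m" by blast
  then show ?thesis by simp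
next
  case False
  then obtain m where "j = Suc (2 * m)" by (metis oddE Suc_eq_plus1)
  then show ?thesis
    using thue_morse_double[of "Suc m"] thue_morse_Suc_double[of "Suc m"] by simp
qed

text \<open>\<open>overlap_at f i p\<close> says that \<open>f i \<dots> f (i + 2 * p)\<close> is an overlap \<open>a x a x a\<close>
  with \<open>length (a x) = p\<close>.\<close>
definition overlap_at :: "(nat \<Rightarrow> 'a) \<Rightarrow> nat \<Rightarrow> nat \<Rightarrow> bool" where
  "overlap_at f i p \<longleftrightarrow> (\<forall>j. i \<le> j \<and> j \<le> i + p \<longrightarrow> f (j + p) = f j)"

lemma overlap_at_thue_morse_half:
  assumes ov: "overlap_at thue_morse i (2 * q)"
  shows "overlap_at thue_morse (i div 2) q"
  unfolding overlap_at_def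
proof (intro allI impI)
  fix m assume m: "i div 2 \<le> m \<and> m \<le> i div 2 + q"
  show "thue_morse (m + q) = thue_morse m"
  proof (cases "i \<le> 2 * m")
    case True
    moreover have "2 * m \<le> i + 2 * q" using m by linarith
    ultimately have "thue_morse (2 * m + 2 * q) = thue_morse (2 * m)"
      using ov unfolding overlap_at_def by blast
    then show ?thesis unfolding distrib_left[symmetric] thue_morse_double .
  next
    case False
    with m have "Suc (2 * m) = i" by linarith
    then have "thue_morse (Suc (2 * m) + 2 * q) = thue_morse (Suc (2 * m))"
      using ov unfolding overlap_at_def by auto
    then show ?thesis unfolding add_Suc distrib_left[symmetric] thue_morse_Suc_double by simp
  qed
qed

text \<open>Since \<open>j \<pm> p\<close> is even and \<open>thue_morse\<close> changes from \<open>2 * m\<close> to \<open>2 * m + 1\<close>,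
  the overlap transports this change to the odd position \<open>j\<close>.\<close>
lemma overlap_at_thue_morse_odd_alternates:
  assumes ov: "overlap_at thue_morse i p" and "odd p" "odd j" "i \<le> j" "j < i + 2 * p"
  shows "thue_morse (Suc j) \<noteq> thue_morse j"
proof (cases "j < i + p")
  case True
  from \<open>odd p\<close> \<open>odd j\<close> obtain m where "j + p = 2 * m" by (metis evenE odd_add)
  then have "thue_morse (Suc (j + p)) \<noteq> thue_morse (j + p)" by simp
  moreover have "thue_morse (j + p) = thue_morse j" "thue_morse (Suc j + p) = thue_morse (Suc j)"
    using ov[unfolded overlap_at_def, rule_format, of j] ov[unfolded overlap_at_def, rule_format, of "Suc j"]
      True \<open>i \<le> j\<close> by auto
  ultimately show ?thesis by simp
next
  case False
  then have "even (j - p)" using \<open>odd p\<close> \<open>odd j\<close> by simp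
  then obtain m where "j - p = 2 * m" by blast
  have window: "i \<le> j - p" "Suc (j - p) \<le> i + p" using False \<open>j < i + 2 * p\<close> by auto
  from \<open>j - p = 2 * m\<close> have "thue_morse (Suc (j - p)) \<noteq> thue_morse (j - p)" by simp
  moreover from window have "thue_morse (j - p + p) = thue_morse (j - p)"
    "thue_morse (Suc (j - p) + p) = thue_morse (Suc (j - p))"
    using ov[unfolded overlap_at_def, rule_format, of "j - p"]
      ov[unfolded overlap_at_def, rule_format, of "Suc (j - p)"] by auto
  moreover have "j - p + p = j" "Suc (j - p) + p = Suc j" using False by auto
  ultimately show ?thesis by simp
qed

lemma no_odd_overlap_at_thue_morse:
  assumes "odd p"
  shows "\<not> overlap_at thue_morse i p"
proof
  assume ov: "overlap_at thue_morse i p"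
  show False
  proof (cases "p = 1")
    case True
    then have "thue_morse (i + 1) = thue_morse i" "thue_morse (i + 1 + 1) = thue_morse (i + 1)"
      using ov[unfolded overlap_at_def, rule_format, of i]
        ov[unfolded overlap_at_def, rule_format, of "i + 1"] by auto
    then show False using thue_morse_not_three_equal[of i] by simp
  next
    case False
    with \<open>odd p\<close> have "p \<ge> 3" by presburger
    define m where "m = (i + 1) div 2"
    have m: "i \<le> 2 * m" "2 * m \<le> i + 1" unfolding m_def by presburger+
    have "thue_morse (Suc r) = thue_morse r" if "r = m \<or> r = Suc m" for r
    proof -
      have "thue_morse (Suc (Suc (2 * r))) \<noteq> thue_morse (Suc (2 * r))"
        by (rule overlap_at_thue_morse_odd_alternates[OF ov \<open>odd p\<close>])
          (use that m \<open>p \<ge> 3\<close> in auto)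
      then show ?thesis using thue_morse_double[of "Suc r"] by simp
    qed
    from this[of m] this[of "Suc m"] show False using thue_morse_not_three_equal[of m] by simp
  qed
qed

theorem thue_morse_overlap_free: "p > 0 \<Longrightarrow> \<not> overlap_at thue_morse i p"
proof (induction p arbitrary: i rule: less_induct)
  case (less p)
  show ?case
  proof (cases "even p")
    case True
    then obtain q where "p = 2 * q" by blast
    with less.prems have "q < p" "0 < q" by simp_all
    with less.IH \<open>p = 2 * q\<close> show ?thesis using overlap_at_thue_morse_half by blast
  qed (use no_odd_overlap_at_thue_morse in blast)
qed

text \<open>Reading \<open>thue_morse\<close> as a 0/1 sequence \<open>t\<close>, \<open>thue_diff j = t (j + 1) - t j + 1\<close>.\<close>
definition thue_diff :: "nat \<Rightarrow> nat" where
  "thue_diff j =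
    (if thue_morse (Suc j) = thue_morse j then 1 else if thue_morse j then 0 else 2)"

lemma thue_diff_eq_iff:
  "thue_diff j' = thue_diff j \<longleftrightarrow>
    (thue_morse (Suc j') = thue_morse j' \<longleftrightarrow> thue_morse (Suc j) = thue_morse j) \<and>
    (thue_morse (Suc j) \<noteq> thue_morse j \<longrightarrow> thue_morse j' = thue_morse j)"
  unfolding thue_diff_def by auto

lemma eq_on_interval_if_steps:
  assumes "\<And>j. i \<le> j \<Longrightarrow> j < k \<Longrightarrow> f (Suc j) = f j" and "i \<le> j" "j \<le> k"
  shows "f j = f i"
  using assms(2,3) by (induction j rule: dec_induct) (use assms(1) in auto)

text \<open>A square of period \<open>l\<close> at \<open>i\<close> in \<open>thue_diff\<close> makes \<open>t (j + l) - t j\<close> constant for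
  \<open>i \<le> j \<le> i + l\<close>. If it is \<open>0\<close>, \<open>thue_morse\<close> has an overlap. Otherwise \<open>t j \<noteq> t (j + l)\<close>
  throughout, and equal steps from opposite values must both be \<open>0\<close>; so \<open>t\<close> is constant on the
  window, contradicting \<open>t (i + l) \<noteq> t i\<close>.\<close>
lemma thue_diff_no_square:
  assumes "l > 0" and sq: "\<And>j. i \<le> j \<Longrightarrow> j < i + l \<Longrightarrow> thue_diff (j + l) = thue_diff j"
  shows False
proof -
  let ?P = "\<lambda>j. thue_morse (j + l) = thue_morse j"
  have P_step: "?P (Suc j) = ?P j" if "i \<le> j" "j < i + l" for j
  proof -
    have "thue_diff (j + l) = thue_diff j" using sq[OF that] .
    then show ?thesis unfolding thue_diff_eq_iff add_Suc by argo
  qed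
  have P_const: "?P j = ?P i" if "i \<le> j" "j \<le> i + l" for j
    by (rule eq_on_interval_if_steps[where f = ?P, OF P_step that])
  show False
  proof (cases "?P i")
    case True
    then have "overlap_at thue_morse i l" unfolding overlap_at_def using P_const by blast
    with \<open>l > 0\<close> show False using thue_morse_overlap_free by blast
  next
    case False
    have "thue_morse (Suc j) = thue_morse j" if "i \<le> j" "j < i + l" for j
    proof -
      have "thue_diff (j + l) = thue_diff j" using sq[OF that] .
      moreover have "\<not> ?P j" using P_const[of j] False that by simp
      ultimately show ?thesis unfolding thue_diff_eq_iff by argo
    qed
    then have "thue_morse (i + l) = thue_morse i"
      by (rule eq_on_interval_if_steps[where k = "i + l"]) auto
    with False show False by simp
  qed
qed

lemma square_free_thue_diff: "square_free (map thue_diff [0..<n])"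
  unfolding square_free_def
proof
  assume "\<exists>p u s. u \<noteq> [] \<and> map thue_diff [0..<n] = p @ u @ u @ s"
  then obtain p u s where "u \<noteq> []" and w: "map thue_diff [0..<n] = p @ u @ u @ s" by blast
  define i l where "i = length p" and "l = length u"
  have "i + 2 * l \<le> n" using arg_cong[OF w, of length] by (simp add: i_def l_def)
  have "thue_diff (j + l) = thue_diff j" if "i \<le> j" "j < i + l" for j
  proof -
    have "map thue_diff [0..<n] ! j = u ! (j - i)" "map thue_diff [0..<n] ! (j + l) = u ! (j - i)"
      unfolding w using that by (auto simp: nth_append i_def l_def)
    with \<open>i + 2 * l \<le> n\<close> that show ?thesis by simp
  qed
  moreover have "l > 0" using \<open>u \<noteq> []\<close> by (simp add: l_def)
  ultimately show False using thue_diff_no_square by blast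
qed

lemma omega_sf_pos:
  assumes "k \<ge> 3"
  shows "omega_sf n k > 0"
proof -
  have "map thue_diff [0..<n] \<in> sf_words n 3"
    using square_free_thue_diff by (auto simp: sf_words_def thue_diff_def)
  then have "omega_sf n 3 > 0"
    unfolding omega_sf_eq_card using finite_sf_words card_gt_0_iff by blast
  then show ?thesis using omega_sf_mono[OF assms] by (meson order.strict_trans2)
qed

lemma s_sf_LIMSEQ:
  assumes "k \<ge> 3"
  shows "(\<lambda>n. ln (omega_sf n k) / n) \<longlonglongrightarrow> s_sf k"
proof -
  have pos: "real (omega_sf n k) \<ge> 1" for n
    using omega_sf_pos[OF assms, of n] by linarith
  have "(\<lambda>n. ln (omega_sf n k) / n) \<longlonglongrightarrow> (INF n\<in>{1..}. ln (omega_sf n k) / n)"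
  proof (rule fekete)
    fix m n
    have "real (omega_sf (m + n) k) \<le> real (omega_sf m k) * omega_sf n k"
      using omega_sf_add_le[of m n k] by (metis of_nat_le_iff of_nat_mult)
    then have "ln (omega_sf (m + n) k) \<le> ln (real (omega_sf m k) * omega_sf n k)"
      using pos[of "m + n"] by (subst ln_le_cancel_iff) auto
    then show "ln (omega_sf (m + n) k) \<le> ln (omega_sf m k) + ln (omega_sf n k)"
      using pos[of m] pos[of n] by (simp add: ln_mult)
  qed (use pos in simp)
  then show ?thesis unfolding s_sf_def by (metis limI)
qed

section \<open>Adding a letter\<close>

definition positions :: "'a \<Rightarrow> 'a list \<Rightarrow> nat set" where
  "positions a w = {i. i < length w \<and> w ! i = a}"

lemma positions_subset: "positions a w \<subseteq> {..<length w}"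
  by (auto simp: positions_def)

lemma finite_positions [simp]: "finite (positions a w)"
  by (simp add: positions_def)

lemma card_positions: "card (positions a w) = count_list w a"
  by (simp add: positions_def count_list_eq_length_filter length_filter_conv_card eq_commute)

lemma exists_frequent_letter:
  assumes "finite A" "A \<noteq> {}" "set w \<subseteq> A"
  shows "\<exists>a\<in>A. length w \<le> card A * count_list w a"
proof (rule ccontr)
  assume "\<not> ?thesis"
  then have "(\<Sum>a\<in>A. card A * count_list w a) < (\<Sum>a\<in>A. length w)"
    using assms(1,2) by (intro sum_strict_mono) auto
  also have "\<dots> = card A * length w" by simp
  finally show False
    using sum_count_set[OF assms(3,1)] by (simp flip: sum_distrib_left)
qed

definition mark :: "'a \<Rightarrow> nat set \<Rightarrow> 'a list \<Rightarrow> 'a list" where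
  "mark b S w = map (\<lambda>i. if i \<in> S then b else w ! i) [0..<length w]"

lemma length_mark [simp]: "length (mark b S w) = length w"
  by (simp add: mark_def)

lemma set_mark_subset: "set (mark b S w) \<subseteq> insert b (set w)"
  by (auto simp: mark_def)

lemma nth_mark: "i < length w \<Longrightarrow> mark b S w ! i = (if i \<in> S then b else w ! i)"
  by (simp add: mark_def)

lemma unmark_mark:
  assumes "S \<subseteq> positions a w" "b \<notin> set w"
  shows "map (\<lambda>y. if y = b then a else y) (mark b S w) = w"
proof (rule nth_equalityI)
  fix i assume "i < length (map (\<lambda>y. if y = b then a else y) (mark b S w))"
  then have "i < length w" by simp
  then show "map (\<lambda>y. if y = b then a else y) (mark b S w) ! i = w ! i"
    using assms nth_mem[of i w] by (auto simp: nth_mark positions_def)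
qed simp

lemma positions_mark:
  assumes "S \<subseteq> {..<length w}" "b \<notin> set w"
  shows "positions b (mark b S w) = S"
proof (intro set_eqI iffI)
  fix i assume "i \<in> positions b (mark b S w)"
  then have "i < length w" "mark b S w ! i = b" by (simp_all add: positions_def)
  then show "i \<in> S" using assms(2) nth_mem[of i w] by (auto simp: nth_mark split: if_splits)
next
  fix i assume "i \<in> S"
  then show "i \<in> positions b (mark b S w)" using assms(1) by (auto simp: positions_def nth_mark)
qed

lemma square_free_mark:
  assumes "square_free w" "S \<subseteq> positions a w" "b \<notin> set w"
  shows "square_free (mark b S w)"
  using assms square_free_mapD[of "\<lambda>y. if y = b then a else y" "mark b S w"]
  by (simp add: unmark_mark)

lemma sum_two_pow_count_le_omega_sf_Suc:
  "(\<Sum>w\<in>sf_words n k. 2 ^ count_list w a) \<le> omega_sf n (Suc k)"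
proof -
  define T where "T = (SIGMA w:sf_words n k. Pow (positions a w))"
  have fresh: "k \<notin> set w" if "w \<in> sf_words n k" for w
    using that by (auto simp: sf_words_def)
  have card_T: "card T = (\<Sum>w\<in>sf_words n k. 2 ^ count_list w a)"
    unfolding T_def by (simp add: card_SigmaI finite_sf_words card_Pow card_positions)
  have inj: "inj_on (\<lambda>(w, S). mark k S w) T"
  proof (rule inj_onI, clarify)
    fix w S w' S' assume "(w, S) \<in> T" "(w', S') \<in> T" and eq: "mark k S w = mark k S' w'"
    then have w: "w \<in> sf_words n k" "S \<subseteq> positions a w"
      and w': "w' \<in> sf_words n k" "S' \<subseteq> positions a w'" by (auto simp: T_def)
    have "w = w'"
      using unmark_mark[OF w(2) fresh[OF w(1)]] unmark_mark[OF w'(2) fresh[OF w'(1)]] eq by simp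
    moreover have "S = positions k (mark k S w)"
      using positions_mark[OF subset_trans[OF w(2) positions_subset] fresh[OF w(1)]] by simp
    then have "S = S'"
      using positions_mark[OF subset_trans[OF w'(2) positions_subset] fresh[OF w'(1)]] eq by simp
    ultimately show "w = w' \<and> S = S'" ..
  qed
  have image: "(\<lambda>(w, S). mark k S w) ` T \<subseteq> sf_words n (Suc k)"
  proof clarify
    fix w S assume "(w, S) \<in> T"
    then have w: "w \<in> sf_words n k" and S: "S \<subseteq> positions a w" by (auto simp: T_def)
    then have "square_free (mark k S w)" using square_free_mark[OF _ S fresh[OF w]]
      by (simp add: sf_words_def)
    moreover have "insert k (set w) \<subseteq> {0..<Suc k}" using w by (auto simp: sf_words_def)
    then have "set (mark k S w) \<subseteq> {0..<Suc k}" using set_mark_subset[of k S w] by blast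
    ultimately show "mark k S w \<in> sf_words n (Suc k)" using w by (simp add: sf_words_def)
  qed
  have "card T = card ((\<lambda>(w, S). mark k S w) ` T)" using inj by (simp add: card_image)
  also have "\<dots> \<le> card (sf_words n (Suc k))" by (rule card_mono[OF finite_sf_words image])
  finally show ?thesis unfolding omega_sf_eq_card card_T .
qed

lemma omega_sf_Suc_ge:
  assumes "k \<ge> 1"
  shows "omega_sf n k * 2 powr (n / k) \<le> k * omega_sf n (Suc k)"
proof -
  have frequent: "2 powr (n / k) \<le> (\<Sum>a<k. 2 ^ count_list w a)" if "w \<in> sf_words n k" for w
  proof -
    have "set w \<subseteq> {..<k}" "length w = n" using that by (auto simp: sf_words_def)
    moreover have "{..<k} \<noteq> {}" using assms by (simp add: lessThan_empty_iff)
    ultimately have "\<exists>a\<in>{..<k}. n \<le> card {..<k} * count_list w a"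
      using exists_frequent_letter[of "{..<k}" w] by simp
    then obtain a where "a < k" and "n \<le> k * count_list w a" by auto
    then have "n / k \<le> count_list w a"
      using assms by (simp add: field_simps flip: of_nat_mult)
    then have "2 powr (n / k) \<le> 2 powr count_list w a" by (rule powr_mono) simp
    also have "\<dots> = 2 ^ count_list w a" by (rule powr_realpow) simp
    also have "\<dots> \<le> (\<Sum>a<k. 2 ^ count_list w a)" using \<open>a < k\<close> by (intro member_le_sum) auto
    finally show ?thesis .
  qed
  have "omega_sf n k * 2 powr (n / k) = (\<Sum>w\<in>sf_words n k. 2 powr (n / k))"
    by (simp add: omega_sf_eq_card)
  also have "\<dots> \<le> (\<Sum>w\<in>sf_words n k. \<Sum>a<k. 2 ^ count_list w a)"
    using frequent by (rule sum_mono)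
  also have "\<dots> = (\<Sum>a<k. \<Sum>w\<in>sf_words n k. 2 ^ count_list w a)" by (rule sum.swap)
  also have "\<dots> \<le> (\<Sum>a<k. real (omega_sf n (Suc k)))"
  proof (rule sum_mono)
    fix a
    have "(\<Sum>w\<in>sf_words n k. 2 ^ count_list w a) = real (\<Sum>w\<in>sf_words n k. 2 ^ count_list w a)"
      by simp
    also have "\<dots> \<le> omega_sf n (Suc k)"
      using sum_two_pow_count_le_omega_sf_Suc of_nat_le_iff by blast
    finally show "(\<Sum>w\<in>sf_words n k. 2 ^ count_list w a) \<le> real (omega_sf n (Suc k))" .
  qed
  also have "\<dots> = k * omega_sf n (Suc k)" by simp
  finally show ?thesis .
qed

lemma s_sf_Suc_ge:
  assumes "k \<ge> 3"
  shows "s_sf k + ln 2 / k \<le> s_sf (Suc k)"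
proof -
  have pos: "real (omega_sf n j) > 0" if "j \<ge> 3" for n j
    using omega_sf_pos[OF that] by simp
  have "ln (omega_sf n k) / n + ln 2 / k \<le> ln k / n + ln (omega_sf n (Suc k)) / n"
    if "n \<ge> 1" for n
  proof -
    have "ln (omega_sf n k * 2 powr (n / k)) \<le> ln (k * omega_sf n (Suc k))"
      using omega_sf_Suc_ge[of k n] assms pos[of k n] pos[of "Suc k" n]
      by (subst ln_le_cancel_iff) auto
    then have "ln (omega_sf n k) + n / k * ln 2 \<le> ln k + ln (omega_sf n (Suc k))"
      using assms pos[of k n] pos[of "Suc k" n] by (simp add: ln_mult ln_powr)
    then have "(ln (omega_sf n k) + n / k * ln 2) / n \<le> (ln k + ln (omega_sf n (Suc k))) / n"
      by (rule divide_right_mono) simp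
    moreover have "n / k * ln 2 / n = ln 2 / k" using that by simp
    ultimately show ?thesis by (simp add: add_divide_distrib)
  qed
  moreover have "(\<lambda>n. ln (omega_sf n k) / n + ln 2 / k) \<longlonglongrightarrow> s_sf k + ln 2 / k"
    using s_sf_LIMSEQ[OF assms] by (intro tendsto_intros)
  moreover have "(\<lambda>n. ln k / n + ln (omega_sf n (Suc k)) / n) \<longlonglongrightarrow> 0 + s_sf (Suc k)"
    using s_sf_LIMSEQ[of "Suc k"] assms by (intro tendsto_intros) auto
  ultimately show ?thesis
    using LIMSEQ_le[of _ "s_sf k + ln 2 / k" _ "0 + s_sf (Suc k)"] by auto
qed

lemma s_sf_ge_harmonic:
  assumes "3 \<le> j" "j \<le> x"
  shows "s_sf j + ln 2 * (\<Sum>k=j..<x. 1 / real k) \<le> s_sf x"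
  using assms(2)
proof (induction x rule: dec_induct)
  case (step x)
  have "s_sf j + ln 2 * (\<Sum>k=j..<Suc x. 1 / real k) = s_sf j + ln 2 * (\<Sum>k=j..<x. 1 / real k) + ln 2 / x"
    using step.hyps by (simp add: algebra_simps)
  also have "\<dots> \<le> s_sf x + ln 2 / x" using step.IH by simp
  also have "\<dots> \<le> s_sf (Suc x)" using s_sf_Suc_ge assms(1) step.hyps by simp
  finally show ?case .
qed simp

section \<open>Upper bound\<close>

lemma omega_sf_Suc_le:
  assumes "n \<ge> 1"
  shows "omega_sf (Suc n) x \<le> (x - 1) * omega_sf n x"
proof -
  define ext where "ext u = (\<lambda>c. u @ [c]) ` ({0..<x} - {last u})" for u :: "nat list"
  have "sf_words (Suc n) x \<subseteq> (\<Union>u\<in>sf_words n x. ext u)"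
  proof
    fix w assume w: "w \<in> sf_words (Suc n) x"
    then have "length w = Suc n" by (simp add: sf_words_def)
    then obtain u c where wuc: "w = u @ [c]" by (auto simp: length_Suc_conv_rev)
    with w assms have "u \<noteq> []" by (auto simp: sf_words_def)
    have "c \<noteq> last u"
    proof
      assume "c = last u"
      then have "w = butlast u @ [c] @ [c] @ []" using wuc \<open>u \<noteq> []\<close> by simp
      moreover have "[c] \<noteq> []" by simp
      ultimately show False using w unfolding sf_words_def square_free_def by blast
    qed
    moreover have "u \<in> sf_words n x" and "c < x"
      using w square_free_appendD[of u "[c]"] by (auto simp: wuc sf_words_def)
    ultimately have "w \<in> ext u" by (auto simp: ext_def wuc)
    with \<open>u \<in> sf_words n x\<close> show "w \<in> (\<Union>u\<in>sf_words n x. ext u)" by blast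
  qed
  then have "omega_sf (Suc n) x \<le> card (\<Union>u\<in>sf_words n x. ext u)"
    unfolding omega_sf_eq_card by (rule card_mono[rotated]) (simp add: ext_def finite_sf_words)
  also have "\<dots> \<le> (\<Sum>u\<in>sf_words n x. card (ext u))" by (rule card_UN_le[OF finite_sf_words])
  also have "\<dots> \<le> (\<Sum>u\<in>sf_words n x. x - 1)"
  proof (rule sum_mono)
    fix u assume u: "u \<in> sf_words n x"
    then have "u \<noteq> []" "set u \<subseteq> {0..<x}" using assms by (auto simp: sf_words_def)
    then have "last u \<in> {0..<x}" using last_in_set by blast
    then show "card (ext u) \<le> x - 1"
      unfolding ext_def using card_image_le[of "{0..<x} - {last u}"] by simp
  qed
  finally show ?thesis by (simp add: omega_sf_eq_card mult.commute)
qed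

lemma omega_sf_le:
  assumes "n \<ge> 1"
  shows "omega_sf n x \<le> x * (x - 1) ^ (n - 1)"
  using assms
proof (induction n rule: dec_induct)
  case base
  have "sf_words 1 x \<subseteq> {w. set w \<subseteq> {0..<x} \<and> length w = 1}" by (auto simp: sf_words_def)
  then have "omega_sf 1 x \<le> card {w. set w \<subseteq> {0..<x} \<and> length w = 1}"
    unfolding omega_sf_eq_card by (intro card_mono finite_lists_length_eq) auto
  then show ?case by (simp add: card_lists_length_eq)
next
  case (step n)
  have "omega_sf (Suc n) x \<le> (x - 1) * omega_sf n x" using omega_sf_Suc_le step.hyps by simp
  also have "\<dots> \<le> (x - 1) * (x * (x - 1) ^ (n - 1))" using step.IH by simp
  also have "\<dots> = x * (x - 1) ^ (Suc n - 1)" using step.hyps by (cases n) simp_all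
  finally show ?case .
qed

lemma s_sf_le:
  assumes "x \<ge> 3"
  shows "s_sf x \<le> ln (real x - 1)"
proof -
  have bound: "ln (omega_sf n x) / n \<le> ln x / n + ln (real x - 1) - ln (real x - 1) / n" if "n \<ge> 1" for n
  proof -
    have "real (omega_sf n x) \<le> real (x * (x - 1) ^ (n - 1))"
      using omega_sf_le[OF that, of x] by (simp only: of_nat_le_iff)
    also have "\<dots> = x * (real x - 1) ^ (n - 1)" using assms by (simp add: of_nat_diff)
    finally have "ln (omega_sf n x) \<le> ln (x * (real x - 1) ^ (n - 1))"
      using omega_sf_pos[OF assms, of n] by (subst ln_le_cancel_iff) auto
    also have "\<dots> = ln x + (real n - 1) * ln (real x - 1)"
      using assms that by (simp add: ln_mult ln_realpow of_nat_diff)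
    finally have "ln (omega_sf n x) / n \<le> (ln x + (real n - 1) * ln (real x - 1)) / n"
      by (rule divide_right_mono) simp
    also have "(a + (real n - 1) * b) / n = a / n + b - b / n" for a b
      using that by (simp add: field_simps)
    finally show ?thesis .
  qed
  have "(\<lambda>n. ln x / n + ln (real x - 1) - ln (real x - 1) / n) \<longlonglongrightarrow> 0 + ln (real x - 1) - 0"
    by (intro tendsto_intros)
  then have "(\<lambda>n. ln x / n + ln (real x - 1) - ln (real x - 1) / n) \<longlonglongrightarrow> ln (real x - 1)"
    unfolding add_0_left diff_zero .
  then show ?thesis by (rule LIMSEQ_le[OF s_sf_LIMSEQ[OF assms]]) (use bound in auto)
qed

theorem theorem2:
  fixes x :: nat
  assumes "x > 3"
  shows "s_sf 3 + ln 2 * (\<Sum>k=3..x-1. 1 / real k) \<le> s_sf x \<and> s_sf x \<le> ln (real x - 1)"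
proof
  have "{3..x-1} = {3..<x}" using assms by auto
  then show "s_sf 3 + ln 2 * (\<Sum>k=3..x-1. 1 / real k) \<le> s_sf x"
    using s_sf_ge_harmonic[of 3 x] assms by simp
  show "s_sf x \<le> ln (real x - 1)" using s_sf_le assms by simp
qed

end
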